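(* Let $f:\mathbb{R}^2\to\mathbb{R}^2$, let $x^*\in\mathbb{R}^2$ with $f(x^* )=0$, and assume $f$ is continuously differentiable on a neighbourhood of $x^*$. Suppose $A=Df(x^* )=V^{-1}\begin{bmatrix}\lambda_1&0\\0&\lambda_2\end{bmatrix}V$ for an invertible $V\in\mathbb{R}^{2\times 2}$ and real numbers $\lambda_1,\lambda_2\neq 0$ with at least one of them positive. Fix $\tau>0$ and $\zeta_1,\zeta_2\in\mathbb{R}$ with $|\zeta_1|<1$, $|\zeta_2|<1$. For $i=1,2$ put $$\epsilon_i=\frac{e^{-\lambda_i\tau}\,(e^{3\lambda_i\tau}-\zeta_i)}{\tau\,(e^{\lambda_i\tau}-1)},\qquad k_i=\begin{cases}0&\text{if }\lambda_i<0,\\ \epsilon_i&\text{if }\lambda_i>0,\end{cases}$$ and $K=V^{-1}\begin{bmatrix}k_1&0\\0&k_2\end{bmatrix}V$. Then $x^*$ is a locally asymptotically stable equilibrium of the controlled system $$\dot x(t)=f(x(t))+K(t)\big(x(t-2\tau)-x(t-\tau)\big),\quad t\ge 0,$$ where $K(t)=0_{2\times 2}$ if $3k\tau\le t<(3k+2)\tau$ and $K(t)=K$ if $(3k+2)\tau\le t<(3k+3)\tau$, $k=0,1,2,\dots$.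
   Context: Since $K(t)=0$ for $t\in[0,2\tau)$, a solution of the controlled system is determined by its initial value $x(0)$. "Locally asymptotically stable" means: for every $\eta>0$ there is $\delta>0$ such that every solution with $\|x(0)-x^*\|<\delta$ is defined for all $t\ge0$ and satisfies $\|x(t)-x^*\|<\eta$ for all $t\ge 0$, and there is $\delta_0>0$ such that $\|x(0)-x^*\|<\delta_0$ implies $x(t)\to x^*$ as $t\to\infty$. *)

theory Defs
  imports "HOL-Analysis.Analysis"
begin

definition diag2 :: "real \<Rightarrow> real \<Rightarrow> real^2^2" where
  "diag2 a b = (\<chi> i j. if i = j then (if i = 1 then a else b) else 0)"

definition ctrl_eps :: "real \<Rightarrow> real \<Rightarrow> real \<Rightarrow> real" where
  "ctrl_eps lam tau zeta =
     exp (- lam * tau) * (exp (3 * lam * tau) - zeta) / (tau * (exp (lam * tau) - 1))"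

definition ctrl_k :: "real \<Rightarrow> real \<Rightarrow> real \<Rightarrow> real" where
  "ctrl_k lam tau zeta = (if lam < 0 then 0 else ctrl_eps lam tau zeta)"

definition ctrl_gain :: "real \<Rightarrow> real^2^2 \<Rightarrow> real \<Rightarrow> real^2^2" where
  "ctrl_gain tau Km t =
     (if \<exists>k::nat. (3 * real k + 2) * tau \<le> t \<and> t < (3 * real k + 3) * tau then Km else 0)"

text \<open>Values of x at negative times never matter since K(t) = 0 for t < 2 tau.\<close>
definition ctrl_solution_on ::
  "(real^2 \<Rightarrow> real^2) \<Rightarrow> real^2^2 \<Rightarrow> real \<Rightarrow> real set \<Rightarrow> (real \<Rightarrow> real^2) \<Rightarrow> bool" where
  "ctrl_solution_on f Km tau I x \<longleftrightarrow>
     continuous_on I x \<and>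
     (\<forall>t\<in>I. ((\<lambda>s. f (x s) + ctrl_gain tau Km s *v (x (s - 2 * tau) - x (s - tau)))
               has_integral (x t - x 0)) {0..t})"

definition ctrl_loc_asym_stable ::
  "(real^2 \<Rightarrow> real^2) \<Rightarrow> real^2^2 \<Rightarrow> real \<Rightarrow> real^2 \<Rightarrow> bool" where
  "ctrl_loc_asym_stable f Km tau xs \<longleftrightarrow>
     (\<forall>eta>0. \<exists>delta>0. \<forall>x0. norm (x0 - xs) < delta \<longrightarrow>
        (\<exists>x. ctrl_solution_on f Km tau {0..} x \<and> x 0 = x0) \<and>
        (\<forall>T x. ctrl_solution_on f Km tau {0..<T} x \<and> x 0 = x0 \<longrightarrow>
                (\<forall>t\<in>{0..<T}. norm (x t - xs) < eta)) \<and>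
        (\<forall>x. ctrl_solution_on f Km tau {0..} x \<and> x 0 = x0 \<longrightarrow>
                (\<forall>t\<ge>0. norm (x t - xs) < eta))) \<and>
     (\<exists>delta0>0. \<forall>x. ctrl_solution_on f Km tau {0..} x \<and> norm (x 0 - xs) < delta0 \<longrightarrow>
        (x \<longlongrightarrow> xs) at_top)"

end

theory Submission
  imports Defs
begin

text \<open>In the coordinates \<open>z = V (x - x\<^sup>*)\<close> the controlled system reads
  \<open>z' = \<Lambda> z + G z + \<chi>(t) diag(k\<^sub>1, k\<^sub>2) (z(t - 2\<tau>) - z(t - \<tau>))\<close>, where \<open>\<chi>\<close> is the
  indicator of the intervals on which \<open>K(t) = K\<close> and \<open>G z = o(|z|)\<close>. Without \<open>G\<close> the two
  components decouple and can be solved explicitly over one period \<open>[0, 3\<tau>]\<close>: the \<open>i\<close>-th one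
  is multiplied by \<open>\<mu>\<^sub>i = exp (3 \<lambda>\<^sub>i \<tau>) + k\<^sub>i (1 - exp (\<lambda>\<^sub>i \<tau>)) \<tau> exp (\<lambda>\<^sub>i \<tau>)\<close>, and the choice
  of \<open>k\<^sub>i\<close> makes \<open>\<mu>\<^sub>i\<close> equal to \<open>exp (3 \<lambda>\<^sub>i \<tau>)\<close> or to \<open>\<zeta>\<^sub>i\<close>, so \<open>|\<mu>\<^sub>i| < 1\<close>.
  A Gronwall estimate in an exponentially weighted norm shows that where \<open>G\<close> has small
  Lipschitz constant it perturbs the period map only slightly, so \<open>|z(3\<tau>)| \<le> q |z(0)|\<close> with
  \<open>q < 1\<close> and \<open>|z| \<le> C |z(0)|\<close> during the period. As the gain is \<open>3\<tau>\<close>-periodic this iterates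
  to exponential decay. A continuation argument keeps small solutions in the region where \<open>G\<close>
  is small, and existence follows from the contraction principle applied to the equation with
  \<open>G\<close> truncated outside that region.\<close>

section \<open>The switching gain\<close>

definition gain_switch :: "real \<Rightarrow> real \<Rightarrow> real" where
  "gain_switch tau = indicator (\<Union>k::nat. {(3 * real k + 2) * tau ..< (3 * real k + 3) * tau})"

lemma ctrl_gain_eq_gain_switch: "ctrl_gain tau Km s = gain_switch tau s *\<^sub>R Km"
  by (auto simp: ctrl_gain_def gain_switch_def indicator_def)

lemma gain_switch_cases: "gain_switch tau s = 0 \<or> gain_switch tau s = 1"
  unfolding gain_switch_def indicator_def by auto

lemma gain_switch_eq_0:
  assumes "tau > 0" "s < 2 * tau"
  shows "gain_switch tau s = 0"
proof -
  have "s < (3 * real k + 2) * tau" for k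
    using assms mult_right_mono[of 2 "3 * real k + 2" tau] by linarith
  then show ?thesis
    by (auto simp: gain_switch_def indicator_def not_le)
qed

lemma gain_switch_eq_1:
  assumes "2 * tau \<le> s" "s < 3 * tau"
  shows "gain_switch tau s = 1"
  using assms by (auto simp: gain_switch_def indicator_def intro!: exI[of _ 0])

lemma gain_switch_periodic:
  assumes "tau > 0" "0 \<le> s"
  shows "gain_switch tau (s + 3 * tau) = gain_switch tau s"
proof -
  have "s + 3 * tau \<in> {(3 * real (Suc k) + 2) * tau ..< (3 * real (Suc k) + 3) * tau}
      \<longleftrightarrow> s \<in> {(3 * real k + 2) * tau ..< (3 * real k + 3) * tau}" for k
    by (auto simp: algebra_simps)
  moreover have "s + 3 * tau \<notin> {2 * tau ..< 3 * tau}"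
    using assms by auto
  ultimately have "(\<exists>k. s + 3 * tau \<in> {(3 * real k + 2) * tau ..< (3 * real k + 3) * tau})
      \<longleftrightarrow> (\<exists>k. s \<in> {(3 * real k + 2) * tau ..< (3 * real k + 3) * tau})"
    by (metis (no_types, lifting) add_0 mult_zero_right not0_implies_Suc of_nat_0)
  then show ?thesis
    by (simp add: gain_switch_def indicator_def)
qed

lemma gain_switch_scaleR_integrable_on:
  fixes w :: "real \<Rightarrow> 'a::euclidean_space"
  assumes "continuous_on {a..b} w"
  shows "(\<lambda>s. gain_switch tau s *\<^sub>R w s) integrable_on {a..b}"
proof -
  obtain B where B: "\<forall>s\<in>{a..b}. norm (w s) \<le> B"
    using compact_imp_bounded[OF compact_continuous_image[OF assms compact_Icc]]
    by (auto simp: bounded_iff)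
  show ?thesis
  proof (rule measurable_bounded_by_integrable_imp_integrable[where g = "\<lambda>_. B"])
    have "gain_switch tau \<in> borel_measurable (lebesgue_on {a..b})"
      unfolding gain_switch_def
      by (intro measurable_restrict_space1 measurable_completion borel_measurable_indicator) auto
    moreover have "w \<in> borel_measurable (lebesgue_on {a..b})"
      by (rule continuous_imp_measurable_on_sets_lebesgue[OF assms]) auto
    ultimately show "(\<lambda>s. gain_switch tau s *\<^sub>R w s) \<in> borel_measurable (lebesgue_on {a..b})"
      by measurable
    show "norm (gain_switch tau s *\<^sub>R w s) \<le> B" if "s \<in> {a..b}" for s
    proof -
      have "norm (w s) \<le> B" using B that by blast
      moreover have "0 \<le> B" using calculation by (rule order_trans[OF norm_ge_zero])
      ultimately show ?thesis using gain_switch_cases[of tau s] by auto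
    qed
  qed auto
qed

lemma diag2_mult_vec_nth [simp]:
  "(diag2 a b *v v) $ 1 = a * v $ 1" "(diag2 a b *v v) $ 2 = b * v $ 2"
  by (simp_all add: diag2_def matrix_vector_mult_def sum_2)

lemma vec2_eq_iff: "(v::'a^2) = w \<longleftrightarrow> v $ 1 = w $ 1 \<and> v $ 2 = w $ 2"
  by (simp add: vec_eq_iff forall_2)

lemma norm_vec2_le: "norm (v::real^2) \<le> \<bar>v $ 1\<bar> + \<bar>v $ 2\<bar>"
  using norm_le_l1_cart[of v] by (simp add: sum_2)

lemma norm_vec2_power2: "(norm (v::real^2))\<^sup>2 = (v $ 1)\<^sup>2 + (v $ 2)\<^sup>2"
  by (simp add: norm_vec_def L2_set_def sum_2)

lemma norm_diag2_mult_vec_le: "norm (diag2 a b *v v) \<le> (\<bar>a\<bar> + \<bar>b\<bar>) * norm v"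
proof -
  have "norm (diag2 a b *v v) \<le> \<bar>a\<bar> * \<bar>v $ 1\<bar> + \<bar>b\<bar> * \<bar>v $ 2\<bar>"
    using norm_vec2_le[of "diag2 a b *v v"] by (simp add: abs_mult)
  also have "\<dots> \<le> \<bar>a\<bar> * norm v + \<bar>b\<bar> * norm v"
    by (intro add_mono mult_left_mono component_le_norm_cart) auto
  finally show ?thesis by (simp add: algebra_simps)
qed

section \<open>Exponentially weighted estimates\<close>

lemma norm_integral_le_exp_weight:
  fixes h :: "real \<Rightarrow> 'a::banach"
  assumes h: "(h has_integral y) {0..t}" and t: "0 \<le> t" and b: "b > 0" and M: "0 \<le> M"
    and bound: "\<And>s. s \<in> {0..t} \<Longrightarrow> norm (h s) \<le> b * M * exp (2 * b * s) + a"
  shows "norm y \<le> M / 2 * exp (2 * b * t) + a * t"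
proof -
  let ?g = "\<lambda>s. b * M * exp (2 * b * s) + a"
  have "(?g has_integral (M / 2 * exp (2 * b * t) + a * t) - (M / 2 * exp (2 * b * 0) + a * 0)) {0..t}"
  proof (rule fundamental_theorem_of_calculus[OF t])
    fix s assume "s \<in> {0..t}"
    show "((\<lambda>s. M / 2 * exp (2 * b * s) + a * s) has_vector_derivative ?g s) (at s within {0..t})"
      unfolding has_real_derivative_iff_has_vector_derivative[symmetric]
      using b by (auto intro!: derivative_eq_intros)
  qed
  then have g: "(?g has_integral M / 2 * (exp (2 * b * t) - 1) + a * t) {0..t}"
    by (simp add: algebra_simps)
  have "norm y \<le> M / 2 * (exp (2 * b * t) - 1) + a * t"
    using integral_norm_bound_integral[OF has_integral_integrable[OF h] has_integral_integrable[OF g] bound]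
    by (simp add: integral_unique[OF h] integral_unique[OF g])
  also have "\<dots> \<le> M / 2 * exp (2 * b * t) + a * t"
    using M by (simp add: algebra_simps)
  finally show ?thesis .
qed

text \<open>A Gronwall-type estimate via the weighted norm \<open>sup\<^sub>u exp (-2 b u) \<parallel>d u\<parallel>\<close>. The derivative
  \<open>h\<close> is only assumed to be controlled by that norm, which makes it applicable to delay equations.\<close>

lemma exp_weighted_gronwall:
  fixes d h :: "real \<Rightarrow> 'a::banach"
  assumes T: "0 \<le> T" and b: "b > 0" and a: "0 \<le> a"
    and d_cont: "continuous_on {0..T} d"
    and d_integral: "\<And>t. t \<in> {0..T} \<Longrightarrow> (h has_integral d t) {0..t}"
    and h_bound: "\<And>M s. 0 \<le> M \<Longrightarrow> (\<And>u. u \<in> {0..T} \<Longrightarrow> norm (d u) \<le> M * exp (2 * b * u))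
        \<Longrightarrow> s \<in> {0..T} \<Longrightarrow> norm (h s) \<le> b * M * exp (2 * b * s) + a"
    and t: "t \<in> {0..T}"
  shows "norm (d t) \<le> 2 * a * T * exp (2 * b * T)"
proof -
  define \<phi> where "\<phi> u = exp (- 2 * b * u) * norm (d u)" for u
  have "continuous_on {0..T} \<phi>"
    unfolding \<phi>_def by (intro continuous_intros d_cont)
  then have "\<exists>us\<in>{0..T}. \<forall>u\<in>{0..T}. \<phi> u \<le> \<phi> us"
    using continuous_attains_sup[OF compact_Icc] T by simp
  then obtain us where us: "us \<in> {0..T}" and max: "\<And>u. u \<in> {0..T} \<Longrightarrow> \<phi> u \<le> \<phi> us"
    by blast
  define M where "M = \<phi> us"
  have M: "0 \<le> M" by (simp add: M_def \<phi>_def)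
  have d_le: "norm (d u) \<le> M * exp (2 * b * u)" if "u \<in> {0..T}" for u
    using max[OF that] unfolding M_def \<phi>_def by (simp add: exp_minus field_simps)
  have key: "norm (d u) \<le> M / 2 * exp (2 * b * u) + a * T" if u: "u \<in> {0..T}" for u
  proof -
    have "norm (d u) \<le> M / 2 * exp (2 * b * u) + a * u"
      using u by (intro norm_integral_le_exp_weight[OF d_integral[OF u] _ b M] h_bound[OF M d_le]) auto
    also have "\<dots> \<le> M / 2 * exp (2 * b * u) + a * T"
      using u a by (simp add: mult_left_mono)
    finally show ?thesis .
  qed
  have "M \<le> M / 2 + exp (- 2 * b * us) * (a * T)"
    using mult_left_mono[OF key[OF us], of "exp (- 2 * b * us)"]
    by (simp add: M_def \<phi>_def algebra_simps exp_minus field_simps)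
  also have "\<dots> \<le> M / 2 + a * T"
    using us b a T by (simp add: mult_left_le_one_le)
  finally have "M \<le> 2 * a * T" by simp
  then have "norm (d t) \<le> 2 * a * T * exp (2 * b * t)"
    using d_le[OF t] by (meson exp_ge_zero mult_right_mono order_trans)
  also have "\<dots> \<le> 2 * a * T * exp (2 * b * T)"
    using t a T b by (intro mult_left_mono) auto
  finally show ?thesis .
qed

text \<open>Global existence for causal integral equations: by Banach's fixed point theorem in the
  bounded continuous functions weighted by \<open>exp (2 b t)\<close>, for which the Picard operator
  is a contraction with constant \<open>1/2\<close>.\<close>

definition exp_weighted :: "real \<Rightarrow> (real \<Rightarrow>\<^sub>C 'a::real_normed_vector) \<Rightarrow> real \<Rightarrow> 'a" where
  "exp_weighted b u t = exp (2 * b * max 0 t) *\<^sub>R apply_bcontfun u t"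

definition weighted_picard ::
  "((real \<Rightarrow> 'a::real_normed_vector) \<Rightarrow> real \<Rightarrow> 'a) \<Rightarrow> real \<Rightarrow> 'a \<Rightarrow> (real \<Rightarrow>\<^sub>C 'a) \<Rightarrow> real \<Rightarrow> 'a"
  where "weighted_picard H b z0 u t =
    exp (- 2 * b * max 0 t) *\<^sub>R (z0 + integral {0..max 0 t} (H (exp_weighted b u)))"

lemma continuous_on_exp_weighted: "continuous_on UNIV (exp_weighted b u)"
  unfolding exp_weighted_def by (intro continuous_intros) auto

context
  fixes H :: "(real \<Rightarrow> 'a::euclidean_space) \<Rightarrow> real \<Rightarrow> 'a" and b B :: real
  assumes b: "b > 0"
    and H_integrable: "\<And>x a c. continuous_on UNIV x \<Longrightarrow> H x integrable_on {a..c}"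
    and H_zero: "\<And>s. norm (H (\<lambda>_. 0) s) \<le> B"
    and H_lipschitz: "\<And>x y C s. 0 \<le> s \<Longrightarrow>
        (\<And>u. u \<le> s \<Longrightarrow> norm (x u - y u) \<le> C * exp (2 * b * max 0 u)) \<Longrightarrow>
        norm (H x s - H y s) \<le> b * C * exp (2 * b * s)"
begin

lemma continuous_on_weighted_picard: "continuous_on UNIV (weighted_picard H b z0 u)"
proof -
  have "isCont (weighted_picard H b z0 u) t" for t
  proof -
    define T where "T = \<bar>t\<bar> + 1"
    have T: "0 < T" "t \<in> {-T<..<T}"
      using abs_ge_zero[of t] by (auto simp: T_def)
    have "max 0 ` {-T..T} \<subseteq> {0..T}"
      using T by auto
    then have "continuous_on {-T..T} (\<lambda>t. integral {0..max 0 t} (H (exp_weighted b u)))"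
      by (intro continuous_on_compose2[OF indefinite_integral_continuous_1[OF
            H_integrable[OF continuous_on_exp_weighted]]] continuous_intros) auto
    then have "continuous_on {-T..T} (weighted_picard H b z0 u)"
      unfolding weighted_picard_def by (intro continuous_intros)
    then show ?thesis
      by (rule continuous_on_interior) (use T in auto)
  qed
  then show ?thesis
    by (simp add: continuous_at_imp_continuous_on)
qed

lemma norm_weighted_picard_diff_le:
  "norm (weighted_picard H b z0 u t - weighted_picard H b z0 v t) \<le> dist u v / 2"
proof -
  let ?X = "exp_weighted b"
  define s where "s = max 0 t"
  have s: "0 \<le> s" by (simp add: s_def)
  have bound: "norm (H (?X u) r - H (?X v) r) \<le> b * dist u v * exp (2 * b * r)" if "0 \<le> r" for r
  proof (rule H_lipschitz[OF that])
    fix w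
    have "norm (?X u w - ?X v w) = exp (2 * b * max 0 w) * dist (u w) (v w)"
      by (simp add: exp_weighted_def dist_norm scaleR_diff_right[symmetric])
    then show "norm (?X u w - ?X v w) \<le> dist u v * exp (2 * b * max 0 w)"
      using dist_bounded[of u w v] by (simp add: mult.commute)
  qed
  have "((\<lambda>r. H (?X u) r - H (?X v) r) has_integral
      integral {0..s} (H (?X u)) - integral {0..s} (H (?X v))) {0..s}"
    using H_integrable[OF continuous_on_exp_weighted] by (intro has_integral_diff integrable_integral)
  then have "norm (integral {0..s} (H (?X u)) - integral {0..s} (H (?X v)))
      \<le> dist u v / 2 * exp (2 * b * s) + 0 * s"
    using bound by (intro norm_integral_le_exp_weight[OF _ s b zero_le_dist]) auto
  then have "exp (- 2 * b * s) * norm (integral {0..s} (H (?X u)) - integral {0..s} (H (?X v)))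
      \<le> exp (- 2 * b * s) * (dist u v / 2 * exp (2 * b * s))"
    by (intro mult_left_mono) auto
  also have "\<dots> = dist u v / 2"
    by (simp add: exp_minus field_simps)
  also have "exp (- 2 * b * s) * norm (integral {0..s} (H (?X u)) - integral {0..s} (H (?X v)))
      = norm (weighted_picard H b z0 u t - weighted_picard H b z0 v t)"
    by (simp add: weighted_picard_def s_def flip: scaleR_diff_right)
  finally show ?thesis .
qed

lemma norm_weighted_picard_zero_le: "norm (weighted_picard H b z0 0 t) \<le> norm z0 + B / (2 * b)"
proof -
  let ?X = "exp_weighted b"
  define s where "s = max 0 t"
  have s: "0 \<le> s" by (simp add: s_def)
  have B: "0 \<le> B" using order_trans[OF norm_ge_zero H_zero] .
  have "norm (H (?X 0) r) \<le> b * (B / b) * exp (2 * b * r) + 0" if "0 \<le> r" for r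
  proof -
    have X0: "?X 0 = (\<lambda>_. 0)"
      by (simp add: exp_weighted_def fun_eq_iff)
    have "B \<le> B * exp (2 * b * r)"
      using B b that by (simp add: mult_le_cancel_left1)
    then show ?thesis
      using H_zero[of r] b unfolding X0 by simp
  qed
  then have "norm (integral {0..s} (H (?X 0))) \<le> B / b / 2 * exp (2 * b * s) + 0 * s"
    using H_integrable[OF continuous_on_exp_weighted] b B
    by (intro norm_integral_le_exp_weight[OF integrable_integral s b]) auto
  then have "exp (- 2 * b * s) * norm (integral {0..s} (H (?X 0)))
      \<le> exp (- 2 * b * s) * (B / b / 2 * exp (2 * b * s))"
    by (intro mult_left_mono) auto
  also have "\<dots> = B / (2 * b)"
    by (simp add: exp_minus field_simps)
  finally have integral_part: "exp (- 2 * b * s) * norm (integral {0..s} (H (?X 0))) \<le> B / (2 * b)" .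
  have initial_part: "exp (- 2 * b * s) * norm z0 \<le> norm z0"
    using b s by (simp add: mult_left_le_one_le)
  have "norm (weighted_picard H b z0 0 t) = exp (- 2 * b * s) * norm (z0 + integral {0..s} (H (?X 0)))"
    by (simp add: weighted_picard_def s_def)
  also have "\<dots> \<le> exp (- 2 * b * s) * norm z0 + exp (- 2 * b * s) * norm (integral {0..s} (H (?X 0)))"
    by (simp add: mult_left_mono norm_triangle_ineq flip: distrib_left)
  finally show ?thesis
    using integral_part initial_part by linarith
qed

lemma causal_integral_equation_solvable:
  obtains z where "continuous_on {0..} z" "z 0 = z0"
    "\<And>t. 0 \<le> t \<Longrightarrow> (H z has_integral z t - z0) {0..t}"
proof -
  let ?F = "weighted_picard H b z0"
  have "?F u \<in> bcontfun" for u
  proof (rule bcontfun_normI[OF continuous_on_weighted_picard])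
    show "norm (?F u t) \<le> norm z0 + B / (2 * b) + dist u 0 / 2" for t
      using norm_triangle_ineq[of "?F 0 t" "?F u t - ?F 0 t"] norm_weighted_picard_zero_le[of z0 t]
        norm_weighted_picard_diff_le[of z0 u t 0] by simp
  qed
  then have \<Phi>: "apply_bcontfun (Bcontfun (?F u)) = ?F u" for u
    by (simp add: Bcontfun_inverse)
  have "\<exists>!u. Bcontfun (?F u) = u"
  proof (rule banach_fix_type[of "1/2"])
    show "\<forall>u v. dist (Bcontfun (?F u)) (Bcontfun (?F v)) \<le> 1 / 2 * dist u v"
    proof (intro allI dist_bound)
      show "dist (Bcontfun (?F u) t) (Bcontfun (?F v) t) \<le> 1 / 2 * dist u v" for u v t
        using norm_weighted_picard_diff_le[of z0 u t v] by (simp add: \<Phi> dist_norm)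
    qed
  qed auto
  then obtain u where u: "Bcontfun (?F u) = u" by blast
  define z where "z = exp_weighted b u"
  have z: "z t = z0 + integral {0..t} (H z)" if "0 \<le> t" for t
    using that fun_cong[OF \<Phi>[of u, unfolded u], of t]
    by (simp add: z_def exp_weighted_def weighted_picard_def flip: exp_add)
  show thesis
  proof
    show "continuous_on {0..} z"
      using continuous_on_exp_weighted by (auto simp: z_def intro: continuous_on_subset)
    show "z 0 = z0" using z[of 0] by simp
    show "(H z has_integral z t - z0) {0..t}" if "0 \<le> t" for t
      using z[OF that] H_integrable[OF continuous_on_exp_weighted] by (simp add: z_def integrable_integral)
  qed
qed

end

section \<open>Linearization\<close>

lemma continuous_derivative_imp_linearization_bound:
  fixes f :: "real^'n \<Rightarrow> real^'m" and Df :: "real^'n \<Rightarrow> real^'n^'m"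
  assumes "open S" "a \<in> S"
    and deriv: "\<And>x. x \<in> S \<Longrightarrow> (f has_derivative (\<lambda>h. Df x *v h)) (at x)"
    and cont: "continuous_on S Df" and e: "e > 0"
  obtains r where "r > 0"
    "\<And>x y. x \<in> cball a r \<Longrightarrow> y \<in> cball a r \<Longrightarrow> norm (f x - f y - Df a *v (x - y)) \<le> e * norm (x - y)"
proof -
  define c where "c = real CARD('m) * real CARD('n)"
  have c: "c > 0" by (simp add: c_def)
  obtain r1 where r1: "r1 > 0" "\<And>x. x \<in> S \<Longrightarrow> dist x a < r1 \<Longrightarrow> dist (Df x) (Df a) < e / c"
    using cont \<open>a \<in> S\<close> e c unfolding continuous_on_iff by (metis divide_pos_pos)
  obtain r2 where r2: "r2 > 0" "ball a r2 \<subseteq> S"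
    using \<open>open S\<close> \<open>a \<in> S\<close> open_contains_ball by blast
  define r where "r = min r1 r2 / 2"
  have r: "r > 0" "cball a r \<subseteq> S" "\<And>x. x \<in> cball a r \<Longrightarrow> dist x a < r1"
    using r1 r2 by (auto simp: r_def dist_commute)
  have onorm_diff_le: "onorm ((\<lambda>h. Df x *v h) - (\<lambda>h. Df a *v h)) \<le> e" if "x \<in> cball a r" for x
  proof -
    have "(\<lambda>h. Df x *v h) - (\<lambda>h. Df a *v h) = (*v) (Df x - Df a)"
      by (simp add: fun_eq_iff matrix_vector_mult_diff_rdistrib)
    moreover have "\<bar>(Df x - Df a) $ i $ j\<bar> \<le> e / c" for i j
    proof -
      have "\<bar>(Df x - Df a) $ i $ j\<bar> \<le> norm (Df x - Df a)"
        using component_le_norm_cart[of "(Df x - Df a) $ i" j] Finite_Cartesian_Product.norm_nth_le[of "Df x - Df a" i] by linarith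
      also have "\<dots> < e / c"
        using r1(2)[of x] r that by (auto simp: dist_norm)
      finally show ?thesis by simp
    qed
    ultimately show ?thesis
      using onorm_le_matrix_component[of "Df x - Df a" "e / c"] c by (simp add: c_def)
  qed
  have "norm (f x - f y - Df a *v (x - y)) \<le> e * norm (x - y)"
    if x: "x \<in> cball a r" and y: "y \<in> cball a r" for x y
  proof -
    have "norm (f x - f y - Df a *v (x - y)) \<le> norm (x - y) * e"
    proof (rule differentiable_bound_linearization[of y x "cball a r" f "\<lambda>x h. Df x *v h" a e])
      show "y + t *\<^sub>R (x - y) \<in> cball a r" if "t \<in> {0..1}" for t
        using convexD_alt[OF convex_cball y x, of t] that by (simp add: algebra_simps)
      show "(f has_derivative (\<lambda>h. Df z *v h)) (at z within cball a r)" if "z \<in> cball a r" for z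
        using deriv r(2) that by (blast intro: has_derivative_at_withinI)
    qed (use onorm_diff_le r in auto)
    then show ?thesis
      by (simp add: mult.commute)
  qed
  with r(1) show thesis by (rule that)
qed

lemma norm_matrix_vector_mult_le_onorm: "norm ((A::real^'n^'m) *v x) \<le> onorm ((*v) A) * norm x"
  by (rule onorm[OF matrix_vector_mul_bounded_linear])

lemma conjugated_remainder_lipschitz:
  fixes f :: "real^'n \<Rightarrow> real^'n" and Df :: "real^'n \<Rightarrow> real^'n^'n" and V Vi D :: "real^'n^'n"
  assumes "open S" "xs \<in> S"
    and deriv: "\<And>x. x \<in> S \<Longrightarrow> (f has_derivative (\<lambda>h. Df x *v h)) (at x)"
    and cont: "continuous_on S Df"
    and inverse: "V ** Vi = mat 1" and D: "Df xs = Vi ** D ** V" and e: "0 < e"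
  obtains r where "0 < r"
    "\<And>v w. v \<in> cball 0 r \<Longrightarrow> w \<in> cball 0 r \<Longrightarrow>
       norm ((V *v f (xs + Vi *v v) - D *v v) - (V *v f (xs + Vi *v w) - D *v w)) \<le> e * norm (v - w)"
proof -
  define c where "c = onorm ((*v) V) + 1"
  define c' where "c' = onorm ((*v) Vi) + 1"
  have c: "0 < c" "0 < c'"
    using onorm_pos_le[OF matrix_vector_mul_bounded_linear[of V]]
      onorm_pos_le[OF matrix_vector_mul_bounded_linear[of Vi]]
    by (simp_all add: c_def c'_def)
  have V_le: "norm (V *v u) \<le> c * norm u" and Vi_le: "norm (Vi *v u) \<le> c' * norm u" for u
    using norm_matrix_vector_mult_le_onorm[of V u] norm_matrix_vector_mult_le_onorm[of Vi u]
    by (simp_all add: c_def c'_def distrib_right add_increasing2)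
  obtain r' where r': "0 < r'" and lin: "\<And>x y. x \<in> cball xs r' \<Longrightarrow> y \<in> cball xs r' \<Longrightarrow>
      norm (f x - f y - Df xs *v (x - y)) \<le> e / (c * c') * norm (x - y)"
    using continuous_derivative_imp_linearization_bound[OF assms(1,2) deriv cont, of "e / (c * c')"] e c
    by auto
  have D_eq: "D *v u = V *v (Df xs *v (Vi *v u))" for u
    by (simp add: D matrix_vector_mul_assoc matrix_mul_assoc inverse)
      (simp add: inverse flip: matrix_mul_assoc)
  show thesis
  proof (rule that)
    show "0 < r' / c'"
      using r' c by simp
    fix v w :: "real^'n" assume "v \<in> cball 0 (r' / c')" "w \<in> cball 0 (r' / c')"
    then have in_ball: "xs + Vi *v v \<in> cball xs r'" "xs + Vi *v w \<in> cball xs r'"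
      using Vi_le[of v] Vi_le[of w] c by (auto simp: dist_norm field_simps)
    have "(V *v f (xs + Vi *v v) - D *v v) - (V *v f (xs + Vi *v w) - D *v w)
        = V *v (f (xs + Vi *v v) - f (xs + Vi *v w) - Df xs *v ((xs + Vi *v v) - (xs + Vi *v w)))"
      by (simp add: D_eq matrix_vector_mult_diff_distrib)
    also have "norm \<dots> \<le> c * (e / (c * c') * norm (Vi *v (v - w)))"
      using V_le lin[OF in_ball] c by (smt (verit) add_diff_cancel_left matrix_vector_mult_diff_distrib mult_left_mono)
    also have "\<dots> \<le> c * (e / (c * c') * (c' * norm (v - w)))"
      using Vi_le[of "v - w"] c e by (intro mult_left_mono) auto
    also have "\<dots> = e * norm (v - w)"
      using c by simp
    finally show "norm ((V *v f (xs + Vi *v v) - D *v v) - (V *v f (xs + Vi *v w) - D *v w)) \<le> e * norm (v - w)" .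
  qed
qed

lemma has_integral_matrix_vector_mult_iff:
  fixes V :: "real^'n^'m" and Vi :: "real^'m^'n"
  assumes "Vi ** V = mat 1"
  shows "((\<lambda>s. V *v F s) has_integral V *v y) S \<longleftrightarrow> (F has_integral y) S"
proof
  assume "((\<lambda>s. V *v F s) has_integral V *v y) S"
  from has_integral_linear[OF this matrix_vector_mul_bounded_linear[of Vi]]
  show "(F has_integral y) S"
    using assms by (simp add: o_def matrix_vector_mul_assoc)
next
  assume "(F has_integral y) S"
  from has_integral_linear[OF this matrix_vector_mul_bounded_linear[of V]]
  show "((\<lambda>s. V *v F s) has_integral V *v y) S"
    by (simp add: o_def)
qed

lemma continuous_on_matrix_vector_mult_iff:
  fixes V :: "real^'n^'m" and Vi :: "real^'m^'n"
  assumes "Vi ** V = mat 1"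
  shows "continuous_on S (\<lambda>s. V *v F s) \<longleftrightarrow> continuous_on S F"
proof
  assume "continuous_on S (\<lambda>s. V *v F s)"
  from bounded_linear.continuous_on[OF matrix_vector_mul_bounded_linear[of Vi] this]
  show "continuous_on S F"
    using assms by (simp add: matrix_vector_mul_assoc)
qed (rule bounded_linear.continuous_on[OF matrix_vector_mul_bounded_linear])

lemma invertible_matrix_inv:
  assumes "invertible A"
  shows "A ** matrix_inv A = mat 1" "matrix_inv A ** A = mat 1"
  using someI_ex[OF assms[unfolded invertible_def]] by (auto simp: matrix_inv_def)

section \<open>Local asymptotic stability\<close>

definition loc_stable :: "(real set \<Rightarrow> (real \<Rightarrow> 'a::real_normed_vector) \<Rightarrow> bool) \<Rightarrow> 'a \<Rightarrow> bool" where
  "loc_stable sol xs \<longleftrightarrow>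
     (\<forall>eta>0. \<exists>delta>0. \<forall>x0. norm (x0 - xs) < delta \<longrightarrow>
        (\<exists>x. sol {0..} x \<and> x 0 = x0) \<and>
        (\<forall>T x. sol {0..<T} x \<and> x 0 = x0 \<longrightarrow> (\<forall>t\<in>{0..<T}. norm (x t - xs) < eta)) \<and>
        (\<forall>x. sol {0..} x \<and> x 0 = x0 \<longrightarrow> (\<forall>t\<ge>0. norm (x t - xs) < eta)))"

definition loc_attractive :: "(real set \<Rightarrow> (real \<Rightarrow> 'a::real_normed_vector) \<Rightarrow> bool) \<Rightarrow> 'a \<Rightarrow> bool" where
  "loc_attractive sol xs \<longleftrightarrow>
     (\<exists>delta0>0. \<forall>x. sol {0..} x \<and> norm (x 0 - xs) < delta0 \<longrightarrow> (x \<longlongrightarrow> xs) at_top)"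

lemma ctrl_loc_asym_stable_iff:
  "ctrl_loc_asym_stable f Km tau xs \<longleftrightarrow>
    loc_stable (ctrl_solution_on f Km tau) xs \<and> loc_attractive (ctrl_solution_on f Km tau) xs"
  by (simp add: ctrl_loc_asym_stable_def loc_stable_def loc_attractive_def)

context
  fixes L :: "'a::real_normed_vector \<Rightarrow> 'b::real_normed_vector" and L' :: "'b \<Rightarrow> 'a"
    and sol :: "real set \<Rightarrow> (real \<Rightarrow> 'a) \<Rightarrow> bool" and sol' :: "real set \<Rightarrow> (real \<Rightarrow> 'b) \<Rightarrow> bool"
    and xs :: 'a
  assumes L: "bounded_linear L" and L': "bounded_linear L'"
    and inverse: "\<And>x. L' (L x) = x" "\<And>y. L (L' y) = y"
    and sol: "\<And>I x. sol I x \<longleftrightarrow> sol' I (\<lambda>t. L (x t - xs))"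
begin

lemma loc_stable_linear_transform:
  assumes stable: "loc_stable sol' 0"
  shows "loc_stable sol xs"
  unfolding loc_stable_def
proof (intro allI impI)
  fix eta :: real assume "0 < eta"
  obtain K where K: "0 < K" "\<And>x. norm (L x) \<le> norm x * K"
    using bounded_linear.pos_bounded[OF L] by blast
  obtain K' where K': "0 < K'" "\<And>y. norm (L' y) \<le> norm y * K'"
    using bounded_linear.pos_bounded[OF L'] by blast
  obtain d where d: "0 < d" and d_stable: "\<And>z0. norm z0 < d \<Longrightarrow>
      (\<exists>z. sol' {0..} z \<and> z 0 = z0) \<and>
      (\<forall>T z. sol' {0..<T} z \<and> z 0 = z0 \<longrightarrow> (\<forall>t\<in>{0..<T}. norm (z t) < eta / K')) \<and>
      (\<forall>z. sol' {0..} z \<and> z 0 = z0 \<longrightarrow> (\<forall>t\<ge>0. norm (z t) < eta / K'))"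
  proof -
    have "0 < eta / K'"
      using \<open>0 < eta\<close> K'(1) by simp
    with stable show thesis
      unfolding loc_stable_def diff_zero using that by blast
  qed
  have close: "norm (x t - xs) < eta" if "norm (L (x t - xs)) < eta / K'" for x t
    using K'(2)[of "L (x t - xs)"] that K'(1) by (simp add: inverse field_simps)
  have "(\<exists>x. sol {0..} x \<and> x 0 = x0) \<and>
      (\<forall>T x. sol {0..<T} x \<and> x 0 = x0 \<longrightarrow> (\<forall>t\<in>{0..<T}. norm (x t - xs) < eta)) \<and>
      (\<forall>x. sol {0..} x \<and> x 0 = x0 \<longrightarrow> (\<forall>t\<ge>0. norm (x t - xs) < eta))"
    if "norm (x0 - xs) < d / K" for x0
  proof (intro conjI allI impI ballI)
    have "norm (L (x0 - xs)) < d"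
      using K(2)[of "x0 - xs"] that K(1) by (simp add: field_simps)
    note z0 = d_stable[OF this]
    then obtain z where z: "sol' {0..} z" "z 0 = L (x0 - xs)"
      by blast
    have "sol {0..} (\<lambda>t. xs + L' (z t))"
      using z(1) by (simp add: sol inverse)
    moreover have "xs + L' (z 0) = x0"
      by (simp add: z(2) inverse)
    ultimately show "\<exists>x. sol {0..} x \<and> x 0 = x0"
      by blast
    have bounded: "norm (z t) < eta / K'"
      if "sol' I z" "z 0 = L (x0 - xs)" "t \<in> I" "I = {0..<T} \<or> I = {0..}" for I z t T
      using z0 that by auto
    show "norm (x t - xs) < eta" if "sol {0..<T} x \<and> x 0 = x0" "t \<in> {0..<T}" for T x t
      using that by (intro close bounded[of "{0..<T}"]) (auto simp: sol)
    show "norm (x t - xs) < eta" if "sol {0..} x \<and> x 0 = x0" "0 \<le> t" for x t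
      using that by (intro close bounded[of "{0..}"]) (auto simp: sol)
  qed
  then show "\<exists>delta>0. \<forall>x0. norm (x0 - xs) < delta \<longrightarrow>
      (\<exists>x. sol {0..} x \<and> x 0 = x0) \<and>
      (\<forall>T x. sol {0..<T} x \<and> x 0 = x0 \<longrightarrow> (\<forall>t\<in>{0..<T}. norm (x t - xs) < eta)) \<and>
      (\<forall>x. sol {0..} x \<and> x 0 = x0 \<longrightarrow> (\<forall>t\<ge>0. norm (x t - xs) < eta))"
    using d K(1) by (auto intro!: exI[of _ "d / K"])
qed

lemma loc_attractive_linear_transform:
  assumes attractive: "loc_attractive sol' 0"
  shows "loc_attractive sol xs"
proof -
  obtain K where K: "0 < K" "\<And>x. norm (L x) \<le> norm x * K"
    using bounded_linear.pos_bounded[OF L] by blast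
  obtain d0 where d0: "0 < d0"
    and d0_attr: "\<And>z. sol' {0..} z \<Longrightarrow> norm (z 0) < d0 \<Longrightarrow> (z \<longlongrightarrow> 0) at_top"
    using attractive unfolding loc_attractive_def by auto
  have "(x \<longlongrightarrow> xs) at_top" if "sol {0..} x" "norm (x 0 - xs) < d0 / K" for x
  proof -
    have "norm (L (x 0 - xs)) < d0"
      using K(2)[of "x 0 - xs"] that(2) K(1) by (simp add: field_simps)
    then have "((\<lambda>t. L (x t - xs)) \<longlongrightarrow> 0) at_top"
      using that(1) by (intro d0_attr) (auto simp: sol)
    then have "((\<lambda>t. xs + L' (L (x t - xs))) \<longlongrightarrow> xs + L' 0) at_top"
      by (intro tendsto_add tendsto_const bounded_linear.tendsto[OF L'])
    then show ?thesis
      using linear_0[OF bounded_linear.linear[OF L']] by (simp add: inverse)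
  qed
  then show ?thesis
    unfolding loc_attractive_def using d0 K(1) by (auto intro!: exI[of _ "d0 / K"])
qed

end

section \<open>The system in diagonal coordinates\<close>

definition initial_segment :: "real set \<Rightarrow> bool" where
  "initial_segment I \<longleftrightarrow> (\<forall>t\<in>I. 0 \<le> t \<and> {0..t} \<subseteq> I)"

lemma initial_segment_atLeast [simp]: "initial_segment {0..}"
  and initial_segment_atLeastLessThan [simp]: "initial_segment {0..<T}"
  by (auto simp: initial_segment_def)

locale switched_feedback =
  fixes tau l1 l2 k1 k2 :: real
  assumes tau_pos: "tau > 0"
begin

definition rhs :: "(real^2 \<Rightarrow> real^2) \<Rightarrow> (real \<Rightarrow> real^2) \<Rightarrow> real \<Rightarrow> real^2" where
  "rhs G z s = diag2 l1 l2 *v z s + G (z s)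
     + gain_switch tau s *\<^sub>R (diag2 k1 k2 *v (z (s - 2 * tau) - z (s - tau)))"

definition solution_on :: "(real^2 \<Rightarrow> real^2) \<Rightarrow> real set \<Rightarrow> (real \<Rightarrow> real^2) \<Rightarrow> bool" where
  "solution_on G I z \<longleftrightarrow> continuous_on I z \<and> (\<forall>t\<in>I. (rhs G z has_integral z t - z 0) {0..t})"

lemma norm_rhs_diff_le:
  "norm (rhs G z s - rhs G' y s) \<le> (\<bar>l1\<bar> + \<bar>l2\<bar>) * norm (z s - y s) + norm (G (z s) - G' (y s))
     + gain_switch tau s * ((\<bar>k1\<bar> + \<bar>k2\<bar>) * (norm (z (s - 2 * tau) - y (s - 2 * tau)) + norm (z (s - tau) - y (s - tau))))"
proof -
  let ?w = "(z (s - 2 * tau) - y (s - 2 * tau)) - (z (s - tau) - y (s - tau))"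
  have "rhs G z s - rhs G' y s = diag2 l1 l2 *v (z s - y s) + (G (z s) - G' (y s))
      + gain_switch tau s *\<^sub>R (diag2 k1 k2 *v ?w)"
    by (simp add: rhs_def algebra_simps)
  moreover have "norm (gain_switch tau s *\<^sub>R (diag2 k1 k2 *v ?w))
      \<le> gain_switch tau s * ((\<bar>k1\<bar> + \<bar>k2\<bar>) * (norm (z (s - 2 * tau) - y (s - 2 * tau)) + norm (z (s - tau) - y (s - tau))))"
  proof -
    have "norm (diag2 k1 k2 *v ?w) \<le> (\<bar>k1\<bar> + \<bar>k2\<bar>) * norm ?w"
      by (rule norm_diag2_mult_vec_le)
    also have "\<dots> \<le> (\<bar>k1\<bar> + \<bar>k2\<bar>) * (norm (z (s - 2 * tau) - y (s - 2 * tau)) + norm (z (s - tau) - y (s - tau)))"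
      by (intro mult_left_mono norm_triangle_ineq4) auto
    finally show ?thesis
      using gain_switch_cases[of tau s] by auto
  qed
  ultimately show ?thesis
    using norm_diag2_mult_vec_le[of l1 l2 "z s - y s"]
    by (smt (verit, best) norm_triangle_ineq)
qed

text \<open>The solution on \<open>[0, 3 tau]\<close>, with \<open>y 0 = 1\<close>, of the scalar equation
  \<open>y' = l y + gain_switch tau t * k * (y (t - 2 tau) - y (t - tau))\<close>; the delayed values needed
  there are those on \<open>[0, 2 tau]\<close>, where the gain is off and \<open>y = exp (l t)\<close>.\<close>

definition mode :: "real \<Rightarrow> real \<Rightarrow> real \<Rightarrow> real" where
  "mode l k t = exp (l * t) + k * (1 - exp (l * tau)) * max 0 (t - 2 * tau) * exp (l * (t - 2 * tau))"

definition multiplier :: "real \<Rightarrow> real \<Rightarrow> real" where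
  "multiplier l k = exp (3 * l * tau) + k * (1 - exp (l * tau)) * tau * exp (l * tau)"

lemma mode_0 [simp]: "mode l k 0 = 1"
  using tau_pos by (simp add: mode_def)

lemma mode_period: "mode l k (3 * tau) = multiplier l k"
  using tau_pos by (simp add: mode_def multiplier_def algebra_simps)

lemma mode_before_switch: "t \<le> 2 * tau \<Longrightarrow> mode l k t = exp (l * t)"
  by (simp add: mode_def)

lemma continuous_on_mode: "continuous_on S (mode l k)"
  unfolding mode_def by (intro continuous_intros)

lemma mode_has_derivative:
  assumes "0 < t" "t < 3 * tau" "t \<noteq> 2 * tau"
  shows "(mode l k has_real_derivative
     l * mode l k t + gain_switch tau t * k * (mode l k (t - 2 * tau) - mode l k (t - tau))) (at t)"
proof (cases "t < 2 * tau")
  case True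
  have "((\<lambda>t. exp (l * t)) has_real_derivative
      l * mode l k t + gain_switch tau t * k * (mode l k (t - 2 * tau) - mode l k (t - tau))) (at t)"
    using True tau_pos by (auto intro!: derivative_eq_intros simp: mode_before_switch gain_switch_eq_0)
  then show ?thesis
    by (rule has_field_derivative_transform_within_open[where S = "{..<2*tau}"])
      (use True in \<open>auto simp: mode_before_switch\<close>)
next
  case False
  then have t: "2 * tau < t" using assms by auto
  define c where "c = k * (1 - exp (l * tau))"
  have mode_eq: "mode l k s = exp (l * s) + c * (s - 2 * tau) * exp (l * (s - 2 * tau))"
    if "2 * tau < s" for s
    using that by (simp add: mode_def c_def)
  have "((\<lambda>s. exp (l * s) + c * (s - 2 * tau) * exp (l * (s - 2 * tau))) has_real_derivative
      l * exp (l * t) + c * exp (l * (t - 2 * tau)) + c * (t - 2 * tau) * (l * exp (l * (t - 2 * tau)))) (at t)"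
    by (auto intro!: derivative_eq_intros)
  moreover have "l * exp (l * t) + c * exp (l * (t - 2 * tau)) + c * (t - 2 * tau) * (l * exp (l * (t - 2 * tau)))
      = l * mode l k t + gain_switch tau t * k * (mode l k (t - 2 * tau) - mode l k (t - tau))"
  proof -
    have "exp (l * (t - tau)) = exp (l * (t - 2 * tau)) * exp (l * tau)"
      by (simp add: algebra_simps flip: exp_add)
    moreover have "mode l k (t - 2 * tau) = exp (l * (t - 2 * tau))" "mode l k (t - tau) = exp (l * (t - tau))"
      using assms by (simp_all add: mode_before_switch)
    ultimately show ?thesis
      using t assms by (simp add: mode_eq gain_switch_eq_1 c_def algebra_simps)
  qed
  ultimately have "((\<lambda>s. exp (l * s) + c * (s - 2 * tau) * exp (l * (s - 2 * tau))) has_real_derivative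
      l * mode l k t + gain_switch tau t * k * (mode l k (t - 2 * tau) - mode l k (t - tau))) (at t)"
    by simp
  then show ?thesis
    by (rule has_field_derivative_transform_within_open[where S = "{2*tau<..}"]) (use t mode_eq in auto)
qed

definition lin_sol :: "real^2 \<Rightarrow> real \<Rightarrow> real^2" where
  "lin_sol z0 t = (mode l1 k1 t * z0 $ 1) *\<^sub>R axis 1 1 + (mode l2 k2 t * z0 $ 2) *\<^sub>R axis 2 1"

lemma lin_sol_nth [simp]:
  "lin_sol z0 t $ 1 = mode l1 k1 t * z0 $ 1" "lin_sol z0 t $ 2 = mode l2 k2 t * z0 $ 2"
  by (simp_all add: lin_sol_def axis_def)

lemma lin_sol_0 [simp]: "lin_sol z0 0 = z0"
  by (simp add: vec2_eq_iff)

lemma continuous_on_lin_sol: "continuous_on S (lin_sol z0)"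
  unfolding lin_sol_def by (intro continuous_intros continuous_on_mode)

lemma lin_sol_has_integral:
  assumes "0 \<le> t" "t \<le> 3 * tau"
  shows "(rhs (\<lambda>_. 0) (lin_sol z0) has_integral lin_sol z0 t - z0) {0..t}"
proof -
  let ?D = "\<lambda>l k s. l * mode l k s + gain_switch tau s * k * (mode l k (s - 2 * tau) - mode l k (s - tau))"
  have "rhs (\<lambda>_. 0) (lin_sol z0) s = (?D l1 k1 s * z0 $ 1) *\<^sub>R axis 1 1 + (?D l2 k2 s * z0 $ 2) *\<^sub>R axis 2 1" for s
    by (simp add: vec2_eq_iff rhs_def axis_def algebra_simps)
  moreover have "(rhs (\<lambda>_. 0) (lin_sol z0) has_integral lin_sol z0 t - lin_sol z0 0) {0..t}"
  proof (rule fundamental_theorem_of_calculus_interior_strong[where S = "{2 * tau}"])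
    fix s assume s: "s \<in> {0<..<t} - {2 * tau}"
    have "((\<lambda>s. (mode l k s * c) *\<^sub>R v) has_vector_derivative (?D l k s * c) *\<^sub>R v) (at s)"
      for l k c and v :: "real^2"
      using has_vector_derivative_scaleR[OF DERIV_cmult_right[OF mode_has_derivative[of s l k]]
          has_vector_derivative_const[of v]] s assms
      by simp
    then show "(lin_sol z0 has_vector_derivative rhs (\<lambda>_. 0) (lin_sol z0) s) (at s)"
      unfolding lin_sol_def \<open>\<And>s. rhs (\<lambda>_. 0) (lin_sol z0) s = _\<close>
      by (intro derivative_intros)
  qed (use assms continuous_on_lin_sol in auto)
  ultimately show ?thesis
    by simp
qed

definition mode_bound :: "real \<Rightarrow> real \<Rightarrow> real" where
  "mode_bound l k = exp (\<bar>l\<bar> * (3 * tau)) + \<bar>k\<bar> * \<bar>1 - exp (l * tau)\<bar> * tau * exp (\<bar>l\<bar> * tau)"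

definition lin_bound :: real where
  "lin_bound = mode_bound l1 k1 + mode_bound l2 k2"

lemma mode_bound_nonneg: "0 \<le> mode_bound l k"
  using tau_pos by (simp add: mode_bound_def)

lemma lin_bound_nonneg: "0 \<le> lin_bound"
  by (simp add: lin_bound_def add_nonneg_nonneg mode_bound_nonneg)

lemma abs_mode_le:
  assumes "0 \<le> t" "t \<le> 3 * tau"
  shows "\<bar>mode l k t\<bar> \<le> mode_bound l k"
proof -
  define P where "P = max 0 (t - 2 * tau) * exp (l * (t - 2 * tau))"
  have "exp (l * t) \<le> exp (\<bar>l\<bar> * (3 * tau))"
    using assms mult_mono[OF abs_ge_self[of l] assms(2)] by simp
  moreover have P: "0 \<le> P" "P \<le> tau * exp (\<bar>l\<bar> * tau)"
  proof -
    show "0 \<le> P" by (simp add: P_def)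
    show "P \<le> tau * exp (\<bar>l\<bar> * tau)"
    proof (cases "t \<le> 2 * tau")
      case False
      have "l * (t - 2 * tau) \<le> \<bar>l\<bar> * tau"
        using False assms mult_mono[OF abs_ge_self[of l], of "t - 2 * tau" tau] by auto
      then show ?thesis
        using False assms by (auto simp: P_def intro!: mult_mono)
    qed (use tau_pos in \<open>simp add: P_def\<close>)
  qed
  moreover have "\<bar>mode l k t\<bar> \<le> exp (l * t) + \<bar>k\<bar> * \<bar>1 - exp (l * tau)\<bar> * P"
    using abs_triangle_ineq[of "exp (l * t)" "k * (1 - exp (l * tau)) * P"] P(1)
    by (simp add: mode_def P_def abs_mult mult.assoc)
  moreover have "\<bar>k\<bar> * \<bar>1 - exp (l * tau)\<bar> * P \<le> \<bar>k\<bar> * \<bar>1 - exp (l * tau)\<bar> * tau * exp (\<bar>l\<bar> * tau)"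
    using mult_left_mono[OF P(2), of "\<bar>k\<bar> * \<bar>1 - exp (l * tau)\<bar>"] by (simp add: mult.assoc)
  ultimately show ?thesis
    unfolding mode_bound_def by linarith
qed

lemma norm_lin_sol_le:
  assumes "0 \<le> t" "t \<le> 3 * tau"
  shows "norm (lin_sol z0 t) \<le> lin_bound * norm z0"
proof -
  have "norm (lin_sol z0 t) \<le> \<bar>mode l1 k1 t\<bar> * \<bar>z0 $ 1\<bar> + \<bar>mode l2 k2 t\<bar> * \<bar>z0 $ 2\<bar>"
    using norm_vec2_le[of "lin_sol z0 t"] by (simp add: abs_mult)
  also have "\<dots> \<le> mode_bound l1 k1 * norm z0 + mode_bound l2 k2 * norm z0"
    using abs_mode_le[OF assms] component_le_norm_cart mode_bound_nonneg by (intro add_mono mult_mono) auto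
  finally show ?thesis
    by (simp add: lin_bound_def algebra_simps)
qed

lemma norm_lin_sol_period_le:
  assumes "\<bar>multiplier l1 k1\<bar> \<le> q" "\<bar>multiplier l2 k2\<bar> \<le> q"
  shows "norm (lin_sol z0 (3 * tau)) \<le> q * norm z0"
proof -
  have q: "0 \<le> q" using assms(1) by (rule order_trans[OF abs_ge_zero])
  have "(norm (lin_sol z0 (3 * tau)))\<^sup>2 = (multiplier l1 k1)\<^sup>2 * (z0 $ 1)\<^sup>2 + (multiplier l2 k2)\<^sup>2 * (z0 $ 2)\<^sup>2"
    by (simp add: norm_vec2_power2 mode_period power_mult_distrib)
  also have "\<dots> \<le> q\<^sup>2 * (z0 $ 1)\<^sup>2 + q\<^sup>2 * (z0 $ 2)\<^sup>2"
  proof -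
    have "(multiplier l k)\<^sup>2 \<le> q\<^sup>2" if "\<bar>multiplier l k\<bar> \<le> q" for l k
      using power_mono[OF that abs_ge_zero, of 2] by simp
    then show ?thesis
      using assms by (intro add_mono mult_right_mono) auto
  qed
  also have "\<dots> = (q * norm z0)\<^sup>2"
    by (simp add: norm_vec2_power2 power_mult_distrib algebra_simps)
  finally show ?thesis
    using q by (auto intro: power2_le_imp_le)
qed

definition growth_rate :: real where
  "growth_rate = \<bar>l1\<bar> + \<bar>l2\<bar> + 1 + 2 * (\<bar>k1\<bar> + \<bar>k2\<bar>)"

definition perturb_const :: real where
  "perturb_const = 6 * tau * lin_bound * exp (6 * growth_rate * tau)"

lemma growth_rate_pos: "0 < growth_rate"
  by (simp add: growth_rate_def add_nonneg_pos)

lemma perturb_const_nonneg: "0 \<le> perturb_const"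
  using tau_pos lin_bound_nonneg by (simp add: perturb_const_def)

lemma gain_switch_delay_terms_le:
  assumes d_le: "\<And>u. u \<in> {0..T} \<Longrightarrow> norm (d u) \<le> M * exp (b * u)"
    and M: "0 \<le> M" and b: "0 \<le> b" and s: "s \<in> {0..T}"
  shows "gain_switch tau s * (norm (d (s - 2 * tau)) + norm (d (s - tau))) \<le> 2 * (M * exp (b * s))"
proof (cases "gain_switch tau s = 0")
  case False
  then have "2 * tau \<le> s" "gain_switch tau s = 1"
    using gain_switch_eq_0[OF tau_pos, of s] gain_switch_cases[of tau s] by argo+
  moreover have d_delay: "norm (d (s - c)) \<le> M * exp (b * s)" if "0 \<le> c" "c \<le> s" for c
  proof -
    have "norm (d (s - c)) \<le> M * exp (b * (s - c))"
      using d_le that s by simp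
    also have "\<dots> \<le> M * exp (b * s)"
      using M that b by (intro mult_left_mono) (auto simp: mult_left_mono)
    finally show ?thesis .
  qed
  ultimately have "norm (d (s - 2 * tau)) \<le> M * exp (b * s)" "norm (d (s - tau)) \<le> M * exp (b * s)"
    using tau_pos by auto
  with \<open>gain_switch tau s = 1\<close> show ?thesis
    by simp
qed (use M in simp)

lemma norm_rhs_minus_lin_rhs_le:
  assumes G: "norm (G (z s)) \<le> e * norm (z s)" and e: "0 \<le> e" "e \<le> 1" and M: "0 \<le> M"
    and d_le: "\<And>u. u \<in> {0..T} \<Longrightarrow> norm (z u - lin_sol (z 0) u) \<le> M * exp (2 * growth_rate * u)"
    and s: "s \<in> {0..T}" and T: "T \<le> 3 * tau"
  shows "norm (rhs G z s - rhs (\<lambda>_. 0) (lin_sol (z 0)) s)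
    \<le> growth_rate * M * exp (2 * growth_rate * s) + e * lin_bound * norm (z 0)"
proof -
  define d where "d u = z u - lin_sol (z 0) u" for u
  let ?E = "M * exp (2 * growth_rate * s)"
  have E: "0 \<le> ?E" using M by simp
  have "e * norm (d s) \<le> ?E"
    using mult_mono[OF e(2) d_le[OF s]] E by (simp add: d_def)
  moreover have "e * norm (lin_sol (z 0) s) \<le> e * lin_bound * norm (z 0)"
    using mult_left_mono[OF norm_lin_sol_le e(1)] s T by (simp add: mult.assoc)
  moreover have "e * norm (z s) \<le> e * norm (d s) + e * norm (lin_sol (z 0) s)"
    using mult_left_mono[OF norm_triangle_sub[of "z s" "lin_sol (z 0) s"] e(1)]
    by (simp add: d_def algebra_simps)
  ultimately have G_le: "norm (G (z s)) \<le> ?E + e * lin_bound * norm (z 0)"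
    using G by linarith
  have switch_le: "gain_switch tau s * (norm (d (s - 2 * tau)) + norm (d (s - tau))) \<le> 2 * ?E"
    using d_le growth_rate_pos M s unfolding d_def by (intro gain_switch_delay_terms_le) auto
  have "norm (rhs G z s - rhs (\<lambda>_. 0) (lin_sol (z 0)) s) \<le> (\<bar>l1\<bar> + \<bar>l2\<bar>) * norm (d s) + norm (G (z s))
      + (\<bar>k1\<bar> + \<bar>k2\<bar>) * (gain_switch tau s * (norm (d (s - 2 * tau)) + norm (d (s - tau))))"
    using norm_rhs_diff_le[of G z s "\<lambda>_. 0" "lin_sol (z 0)"] by (simp add: d_def mult.left_commute)
  also have "\<dots> \<le> (\<bar>l1\<bar> + \<bar>l2\<bar>) * ?E + (?E + e * lin_bound * norm (z 0)) + (\<bar>k1\<bar> + \<bar>k2\<bar>) * (2 * ?E)"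
    using d_le[OF s] G_le switch_le by (intro add_mono mult_left_mono) (auto simp: d_def)
  finally show ?thesis
    by (simp add: growth_rate_def algebra_simps)
qed

lemma norm_solution_minus_lin_sol_le:
  assumes sol: "solution_on G I z" and I: "initial_segment I"
    and G: "\<forall>s\<in>I. norm (G (z s)) \<le> e * norm (z s)" and e: "0 \<le> e" "e \<le> 1"
    and T: "T \<in> I" "T \<le> 3 * tau" and t: "t \<in> {0..T}"
  shows "norm (z t - lin_sol (z 0) t) \<le> perturb_const * e * norm (z 0)"
proof -
  define a where "a = e * lin_bound * norm (z 0)"
  have sub: "{0..T} \<subseteq> I" "0 \<le> T"
    using I T by (auto simp: initial_segment_def)
  have a: "0 \<le> a"
    using e lin_bound_nonneg by (simp add: a_def)
  have "norm (z t - lin_sol (z 0) t) \<le> 2 * a * T * exp (2 * growth_rate * T)"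
  proof (rule exp_weighted_gronwall[OF sub(2) growth_rate_pos a _ _ _ t])
    show "continuous_on {0..T} (\<lambda>t. z t - lin_sol (z 0) t)"
      using sol sub unfolding solution_on_def
      by (intro continuous_intros continuous_on_lin_sol) (auto intro: continuous_on_subset)
    show "((\<lambda>s. rhs G z s - rhs (\<lambda>_. 0) (lin_sol (z 0)) s) has_integral z u - lin_sol (z 0) u) {0..u}"
      if "u \<in> {0..T}" for u
    proof -
      have "(rhs G z has_integral z u - z 0) {0..u}"
        using sol sub that by (auto simp: solution_on_def)
      moreover have "(rhs (\<lambda>_. 0) (lin_sol (z 0)) has_integral lin_sol (z 0) u - z 0) {0..u}"
        using that T by (intro lin_sol_has_integral) auto
      ultimately have "((\<lambda>s. rhs G z s - rhs (\<lambda>_. 0) (lin_sol (z 0)) s) has_integral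
          (z u - z 0) - (lin_sol (z 0) u - z 0)) {0..u}"
        by (rule has_integral_diff)
      then show ?thesis
        by simp
    qed
    show "norm (rhs G z s - rhs (\<lambda>_. 0) (lin_sol (z 0)) s) \<le> growth_rate * M * exp (2 * growth_rate * s) + a"
      if "0 \<le> M" "\<And>u. u \<in> {0..T} \<Longrightarrow> norm (z u - lin_sol (z 0) u) \<le> M * exp (2 * growth_rate * u)"
        "s \<in> {0..T}" for M s
      unfolding a_def using G sub that e T by (intro norm_rhs_minus_lin_rhs_le) auto
  qed
  also have "\<dots> \<le> 2 * a * (3 * tau) * exp (2 * growth_rate * (3 * tau))"
    using a sub T growth_rate_pos by (intro mult_mono) auto
  finally show ?thesis
    by (simp add: a_def perturb_const_def algebra_simps)
qed

lemma solution_on_subset: "solution_on G I z \<Longrightarrow> J \<subseteq> I \<Longrightarrow> solution_on G J z"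
  by (auto simp: solution_on_def intro: continuous_on_subset)

text \<open>The gain is \<open>3 tau\<close>-periodic on \<open>[0, \<infinity>)\<close>, so a solution restarted at time
  \<open>3 tau\<close> is again a solution.\<close>

lemma solution_on_shift:
  assumes sol: "solution_on G I z" and I: "initial_segment I" and T: "3 * tau \<in> I"
  shows "solution_on G {s. 0 \<le> s \<and> s + 3 * tau \<in> I} (\<lambda>s. z (s + 3 * tau))"
    and "initial_segment {s. 0 \<le> s \<and> s + 3 * tau \<in> I}"
proof -
  let ?I = "{s. 0 \<le> s \<and> s + 3 * tau \<in> I}"
  show "initial_segment ?I"
    using I tau_pos by (fastforce simp: initial_segment_def)
  have "continuous_on I z"
    using sol by (simp add: solution_on_def)
  then have "continuous_on ?I (\<lambda>s. z (s + 3 * tau))"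
    by (rule continuous_on_compose2) (auto intro!: continuous_intros)
  moreover have "(rhs G (\<lambda>s. z (s + 3 * tau)) has_integral z (t + 3 * tau) - z (3 * tau)) {0..t}"
    if t: "0 \<le> t" "t + 3 * tau \<in> I" for t
  proof -
    have int_T: "(rhs G z has_integral z (3 * tau) - z 0) {0..3 * tau}"
      and int_t: "(rhs G z has_integral z (t + 3 * tau) - z 0) {0..t + 3 * tau}"
      using sol T t by (auto simp: solution_on_def)
    have "rhs G z integrable_on {3 * tau..t + 3 * tau}"
      by (rule integrable_subinterval_real[OF has_integral_integrable[OF int_t]]) (use t tau_pos in auto)
    then obtain y where y: "(rhs G z has_integral y) {3 * tau..t + 3 * tau}"
      by blast
    have "(rhs G z has_integral (z (3 * tau) - z 0) + y) {0..t + 3 * tau}"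
      using has_integral_combine[OF _ _ int_T y] t tau_pos by simp
    then have "y = z (t + 3 * tau) - z (3 * tau)"
      using has_integral_unique[OF int_t] by (simp add: algebra_simps)
    with y have "((rhs G z \<circ> (+) (3 * tau)) has_integral z (t + 3 * tau) - z (3 * tau)) {0..t}"
      by (simp add: has_integral_shift_Icc_real add.commute)
    moreover have "(rhs G z \<circ> (+) (3 * tau)) s = rhs G (\<lambda>s. z (s + 3 * tau)) s" if "s \<in> {0..t}" for s
      using gain_switch_periodic[OF tau_pos, of s] that
      by (simp add: rhs_def algebra_simps)
    ultimately show ?thesis
      by (rule has_integral_eq[rotated])
  qed
  ultimately show "solution_on G ?I (\<lambda>s. z (s + 3 * tau))"
    by (simp add: solution_on_def)
qed

lemma rhs_integrable_on:
  assumes "continuous_on UNIV z" "continuous_on UNIV G"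
  shows "rhs G z integrable_on {a..b}"
proof -
  have "(\<lambda>s. diag2 l1 l2 *v z s + G (z s)) integrable_on {a..b}"
    using assms by (intro integrable_continuous_real continuous_intros
        continuous_on_compose2[OF assms(2)] bounded_linear.continuous_on[OF matrix_vector_mul_bounded_linear])
      (auto intro: continuous_on_subset)
  moreover have "(\<lambda>s. gain_switch tau s *\<^sub>R (diag2 k1 k2 *v (z (s - 2 * tau) - z (s - tau)))) integrable_on {a..b}"
    by (intro gain_switch_scaleR_integrable_on bounded_linear.continuous_on[OF matrix_vector_mul_bounded_linear]
        continuous_intros continuous_on_compose2[OF assms(1)]) auto
  ultimately show ?thesis
    unfolding rhs_def by (rule integrable_add)
qed

lemma norm_rhs_diff_le_history_bound:
  assumes G_lip: "\<And>v w. norm (G v - G w) \<le> L * norm (v - w)" and L: "0 \<le> L"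
    and xy: "\<And>u. u \<le> s \<Longrightarrow> norm (x u - y u) \<le> E"
  shows "norm (rhs G x s - rhs G y s) \<le> (\<bar>l1\<bar> + \<bar>l2\<bar> + L + 2 * (\<bar>k1\<bar> + \<bar>k2\<bar>)) * E"
proof -
  have "norm (rhs G x s - rhs G y s) \<le> (\<bar>l1\<bar> + \<bar>l2\<bar>) * E + L * E + 1 * ((\<bar>k1\<bar> + \<bar>k2\<bar>) * (E + E))"
  proof (rule order_trans[OF norm_rhs_diff_le add_mono[OF add_mono]])
    show "(\<bar>l1\<bar> + \<bar>l2\<bar>) * norm (x s - y s) \<le> (\<bar>l1\<bar> + \<bar>l2\<bar>) * E"
      using xy[of s] by (intro mult_left_mono) auto
    show "norm (G (x s) - G (y s)) \<le> L * E"
      using G_lip[of "x s" "y s"] mult_left_mono[OF xy[of s] L] by linarith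
    show "gain_switch tau s * ((\<bar>k1\<bar> + \<bar>k2\<bar>) * (norm (x (s - 2 * tau) - y (s - 2 * tau)) + norm (x (s - tau) - y (s - tau))))
        \<le> 1 * ((\<bar>k1\<bar> + \<bar>k2\<bar>) * (E + E))"
      using gain_switch_cases[of tau s] xy[of "s - 2 * tau"] xy[of "s - tau"] tau_pos
      by (intro mult_mono mult_left_mono add_mono) auto
  qed
  then show ?thesis
    by (simp add: algebra_simps)
qed

lemma solution_exists_if_lipschitz:
  assumes G_lip: "\<And>v w. norm (G v - G w) \<le> L * norm (v - w)" and L: "0 \<le> L"
  obtains z where "solution_on G {0..} z" "z 0 = z0"
proof -
  define b where "b = \<bar>l1\<bar> + \<bar>l2\<bar> + L + 2 * (\<bar>k1\<bar> + \<bar>k2\<bar>) + 1"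
  have b: "0 < b"
    using L by (simp add: b_def add_nonneg_pos)
  have "L-lipschitz_on UNIV G"
    using G_lip L by (intro lipschitz_onI) (auto simp: dist_norm)
  then have G_cont: "continuous_on UNIV G"
    by (rule lipschitz_on_continuous_on)
  have rhs_lipschitz: "norm (rhs G x s - rhs G y s) \<le> b * C * exp (2 * b * s)"
    if s: "0 \<le> s" and xy: "\<And>u. u \<le> s \<Longrightarrow> norm (x u - y u) \<le> C * exp (2 * b * max 0 u)"
    for x y C s
  proof -
    have "0 \<le> C"
      using order_trans[OF norm_ge_zero xy[of s]] s by (simp add: zero_le_mult_iff)
    then have "norm (x u - y u) \<le> C * exp (2 * b * s)" if "u \<le> s" for u
      using xy[OF that] that s b by (smt (verit) exp_le_cancel_iff mult_left_mono)
    then have "norm (rhs G x s - rhs G y s) \<le> (b - 1) * (C * exp (2 * b * s))"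
      using norm_rhs_diff_le_history_bound[OF G_lip L] by (simp add: b_def)
    also have "\<dots> \<le> b * (C * exp (2 * b * s))"
      using \<open>0 \<le> C\<close> by (simp add: algebra_simps)
    finally show ?thesis
      by (simp add: mult.assoc)
  qed
  obtain z where z: "continuous_on {0..} z" "z 0 = z0" "\<And>t. 0 \<le> t \<Longrightarrow> (rhs G z has_integral z t - z0) {0..t}"
  proof (rule causal_integral_equation_solvable[where H = "rhs G" and B = "norm (G 0)", OF b])
    show "rhs G x integrable_on {a..c}" if "continuous_on UNIV x" for x a c
      using that G_cont by (rule rhs_integrable_on)
    show "norm (rhs G (\<lambda>_. 0) s) \<le> norm (G 0)" for s
      by (simp add: rhs_def)
  qed (use rhs_lipschitz in auto)
  show thesis
    by (rule that[of z]) (use z in \<open>auto simp: solution_on_def\<close>)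
qed

lemma multiplier_ctrl_k:
  assumes "lam \<noteq> 0"
  shows "multiplier lam (ctrl_k lam tau zeta) = (if lam < 0 then exp (3 * lam * tau) else zeta)"
proof (cases "lam < 0")
  case False
  define E where "E = exp (lam * tau)"
  have "E - 1 \<noteq> 0"
    using False assms tau_pos by (simp add: E_def)
  then have "ctrl_k lam tau zeta * tau * E = (exp (3 * lam * tau) - zeta) / (E - 1)"
    using False tau_pos by (simp add: ctrl_k_def ctrl_eps_def E_def exp_minus field_simps)
  then have "ctrl_k lam tau zeta * (1 - E) * tau * E = - (exp (3 * lam * tau) - zeta)"
    using \<open>E - 1 \<noteq> 0\<close> by (simp add: field_simps)
  then show ?thesis
    using False by (simp add: multiplier_def E_def)
qed (simp add: multiplier_def ctrl_k_def)

lemma abs_multiplier_ctrl_k_less_1: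
  assumes "lam \<noteq> 0" "\<bar>zeta\<bar> < 1"
  shows "\<bar>multiplier lam (ctrl_k lam tau zeta)\<bar> < 1"
  using assms tau_pos by (simp add: multiplier_ctrl_k mult_neg_pos)

lemma ctrl_solution_on_iff_solution_on:
  assumes inverse: "V ** Vi = mat 1" "Vi ** V = mat 1"
  shows "ctrl_solution_on f (Vi ** diag2 k1 k2 ** V) tau I x \<longleftrightarrow>
    solution_on (\<lambda>w. V *v f (xs + Vi *v w) - diag2 l1 l2 *v w) I (\<lambda>t. V *v (x t - xs))"
proof -
  have rhs_eq: "rhs (\<lambda>w. V *v f (xs + Vi *v w) - diag2 l1 l2 *v w) (\<lambda>t. V *v (x t - xs)) s
      = V *v (f (x s) + ctrl_gain tau (Vi ** diag2 k1 k2 ** V) s *v (x (s - 2 * tau) - x (s - tau)))" for s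
  proof -
    have "V *v ((Vi ** diag2 k1 k2 ** V) *v u) = diag2 k1 k2 *v (V *v u)" for u
      by (simp add: matrix_vector_mul_assoc matrix_mul_assoc inverse)
    then show ?thesis
      by (simp add: rhs_def ctrl_gain_eq_gain_switch matrix_vector_mul_assoc inverse
          matrix_vector_right_distrib matrix_vector_mult_diff_distrib matrix_vector_mult_scaleR
          scaleR_diff_right flip: scaleR_matrix_vector_assoc)
  qed
  have "V *v (x t - xs) - V *v (x 0 - xs) = V *v (x t - x 0)" for t
    by (simp add: matrix_vector_mult_diff_distrib)
  moreover have "continuous_on I (\<lambda>t. x t - xs) \<longleftrightarrow> continuous_on I x"
    using continuous_on_add[OF _ continuous_on_const, of I "\<lambda>t. x t - xs" xs]
    by (auto intro: continuous_intros)
  ultimately show ?thesis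
    unfolding ctrl_solution_on_def solution_on_def rhs_eq
    by (simp add: has_integral_matrix_vector_mult_iff[OF inverse(2)]
        continuous_on_matrix_vector_mult_iff[OF inverse(2)])
qed

end

section \<open>Contraction over one period\<close>

locale contracting_switched_feedback = switched_feedback +
  assumes abs_multiplier_less_1: "\<bar>multiplier l1 k1\<bar> < 1" "\<bar>multiplier l2 k2\<bar> < 1"
begin

definition q_lin :: real where
  "q_lin = max \<bar>multiplier l1 k1\<bar> \<bar>multiplier l2 k2\<bar>"

text \<open>The admissible relative size of the nonlinearity: small enough that the
  perturbation of one period does not destroy the contraction \<open>q_lin\<close> of the linear part.\<close>

definition eps0 :: real where
  "eps0 = min 1 ((1 - q_lin) / (2 * (perturb_const + 1)))"

definition contraction :: real where
  "contraction = q_lin + perturb_const * eps0"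

definition overshoot :: real where
  "overshoot = lin_bound + perturb_const + 1"

lemma q_lin_less_1: "q_lin < 1"
  using abs_multiplier_less_1 by (simp add: q_lin_def)

lemma eps0_pos: "0 < eps0"
  using q_lin_less_1 perturb_const_nonneg by (simp add: eps0_def)

lemma eps0_le_1: "eps0 \<le> 1"
  by (simp add: eps0_def)

lemma contraction_nonneg: "0 \<le> contraction"
  using perturb_const_nonneg eps0_pos by (simp add: contraction_def q_lin_def le_max_iff_disj)

lemma contraction_less_1: "contraction < 1"
proof -
  have "perturb_const * eps0 \<le> perturb_const * ((1 - q_lin) / (2 * (perturb_const + 1)))"
    using perturb_const_nonneg by (intro mult_left_mono) (auto simp: eps0_def)
  also have "\<dots> = (1 - q_lin) / 2 * (perturb_const / (perturb_const + 1))"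
    using perturb_const_nonneg by (simp add: field_simps)
  also have "\<dots> \<le> (1 - q_lin) / 2"
    using perturb_const_nonneg q_lin_less_1 by (intro mult_left_le) auto
  finally show ?thesis
    using q_lin_less_1 by (simp add: contraction_def)
qed

lemma overshoot_ge_1: "1 \<le> overshoot"
  using lin_bound_nonneg perturb_const_nonneg by (simp add: overshoot_def)

lemma norm_solution_first_period_le:
  assumes sol: "solution_on G I z" and I: "initial_segment I"
    and G: "\<forall>s\<in>I. norm (G (z s)) \<le> eps0 * norm (z s)"
  shows "t \<in> I \<Longrightarrow> t \<le> 3 * tau \<Longrightarrow> norm (z t) \<le> overshoot * norm (z 0)"
    and "3 * tau \<in> I \<Longrightarrow> norm (z (3 * tau)) \<le> contraction * norm (z 0)"
proof -
  have close: "norm (z t - lin_sol (z 0) t) \<le> perturb_const * eps0 * norm (z 0)"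
    if "t \<in> I" "t \<le> 3 * tau" for t
    using norm_solution_minus_lin_sol_le[OF sol I G _ eps0_le_1 that] eps0_pos that I
    by (auto simp: initial_segment_def)
  show "norm (z t) \<le> overshoot * norm (z 0)" if t: "t \<in> I" "t \<le> 3 * tau"
  proof -
    have "perturb_const * eps0 * norm (z 0) \<le> perturb_const * norm (z 0)"
      using perturb_const_nonneg eps0_le_1 by (intro mult_right_mono mult_left_le) auto
    moreover have "norm (lin_sol (z 0) t) \<le> lin_bound * norm (z 0)"
      using t I by (intro norm_lin_sol_le) (auto simp: initial_segment_def)
    ultimately have "norm (z t) \<le> lin_bound * norm (z 0) + perturb_const * norm (z 0)"
      using close[OF t] norm_triangle_sub[of "z t" "lin_sol (z 0) t"] by linarith
    moreover have "overshoot * norm (z 0) = lin_bound * norm (z 0) + perturb_const * norm (z 0) + norm (z 0)"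
      by (simp add: overshoot_def algebra_simps)
    ultimately show ?thesis
      using norm_ge_zero[of "z 0"] by linarith
  qed
  show "norm (z (3 * tau)) \<le> contraction * norm (z 0)" if T: "3 * tau \<in> I"
  proof -
    have "norm (lin_sol (z 0) (3 * tau)) \<le> q_lin * norm (z 0)"
      by (rule norm_lin_sol_period_le) (simp_all add: q_lin_def)
    then show ?thesis
      using close[OF T] norm_triangle_sub[of "z (3 * tau)" "lin_sol (z 0) (3 * tau)"]
      by (simp add: contraction_def algebra_simps)
  qed
qed

text \<open>The common induction step of the next two lemmas: restart the solution at time \<open>3 tau\<close>,
  by which its norm has contracted by the factor \<open>contraction\<close>.\<close>

lemma shifted_solution_bound:
  assumes sol: "solution_on G I z" and I: "initial_segment I"
    and G: "\<forall>s\<in>I. norm (G (z s)) \<le> eps0 * norm (z s)"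
    and T: "3 * tau \<le> t" "t \<in> I"
    and bound: "\<And>w J. solution_on G J w \<Longrightarrow> initial_segment J \<Longrightarrow>
        \<forall>s\<in>J. norm (G (w s)) \<le> eps0 * norm (w s) \<Longrightarrow> t - 3 * tau \<in> J \<Longrightarrow>
        norm (w (t - 3 * tau)) \<le> C * norm (w 0)"
    and C: "0 \<le> C"
  shows "norm (z t) \<le> C * contraction * norm (z 0)"
proof -
  have "{0..t} \<subseteq> I"
    using I T(2) by (simp add: initial_segment_def)
  then have T_in: "3 * tau \<in> I"
    using T(1) tau_pos by auto
  have "norm (z t) \<le> C * norm (z (3 * tau))"
    using bound[OF solution_on_shift[OF sol I T_in]] G T by auto
  also have "\<dots> \<le> C * (contraction * norm (z 0))"
    using norm_solution_first_period_le(2)[OF sol I G T_in] C by (rule mult_left_mono)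
  finally show ?thesis
    by (simp add: mult.assoc)
qed

lemma norm_solution_le_overshoot:
  assumes sol: "solution_on G I z" and I: "initial_segment I"
    and G: "\<forall>s\<in>I. norm (G (z s)) \<le> eps0 * norm (z s)" and t: "t \<in> I"
  shows "norm (z t) \<le> overshoot * norm (z 0)"
proof -
  obtain n :: nat where n: "t / (3 * tau) \<le> real n"
    using real_arch_simple by blast
  have "t \<le> 3 * real n * tau + 3 * tau"
    using n tau_pos by (simp add: divide_le_eq algebra_simps)
  with sol I G t show ?thesis
  proof (induction n arbitrary: z I t)
    case 0
    then show ?case
      by (intro norm_solution_first_period_le(1)) auto
  next
    case (Suc n)
    show ?case
    proof (cases "t \<le> 3 * tau")
      case True
      then show ?thesis
        using Suc.prems by (intro norm_solution_first_period_le(1)) auto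
    next
      case False
      have "norm (z t) \<le> overshoot * contraction * norm (z 0)"
        using Suc.prems False overshoot_ge_1
        by (intro shifted_solution_bound[where C = overshoot] Suc.IH) (auto simp: algebra_simps)
      also have "\<dots> \<le> overshoot * norm (z 0)"
        using contraction_less_1 contraction_nonneg overshoot_ge_1
        by (intro mult_right_mono mult_left_le) auto
      finally show ?thesis .
    qed
  qed
qed

lemma norm_solution_decay:
  assumes "solution_on G I z" "initial_segment I"
    "\<forall>s\<in>I. norm (G (z s)) \<le> eps0 * norm (z s)" "t \<in> I" "3 * real n * tau \<le> t"
  shows "norm (z t) \<le> overshoot * contraction ^ n * norm (z 0)"
  using assms
proof (induction n arbitrary: z I t)
  case 0
  then show ?case
    using norm_solution_le_overshoot by simp
next
  case (Suc n)
  have "0 \<le> 3 * real n * tau"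
    using tau_pos by simp
  then have "norm (z t) \<le> overshoot * contraction ^ n * contraction * norm (z 0)"
    using Suc.prems overshoot_ge_1 contraction_nonneg
    by (intro shifted_solution_bound[where C = "overshoot * contraction ^ n"] Suc.IH)
      (auto simp: algebra_simps)
  then show ?case
    by (simp add: algebra_simps)
qed

lemma solution_tendsto_0:
  assumes sol: "solution_on G {0..} z" and G: "\<forall>s\<in>{0..}. norm (G (z s)) \<le> eps0 * norm (z s)"
  shows "(z \<longlongrightarrow> 0) at_top"
proof (rule tendstoI)
  fix \<epsilon> :: real assume "0 < \<epsilon>"
  have "(\<lambda>n. overshoot * norm (z 0) * contraction ^ n) \<longlonglongrightarrow> overshoot * norm (z 0) * 0"
    using contraction_nonneg contraction_less_1 by (intro tendsto_mult_left LIMSEQ_power_zero) auto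
  then have "\<forall>\<^sub>F n in sequentially. overshoot * norm (z 0) * contraction ^ n < \<epsilon>"
    using \<open>0 < \<epsilon>\<close> by (simp add: order_tendstoD(2))
  then obtain N where N: "overshoot * norm (z 0) * contraction ^ N < \<epsilon>"
    using eventually_sequentially by auto
  show "\<forall>\<^sub>F t in at_top. dist (z t) 0 < \<epsilon>"
  proof (rule eventually_at_top_linorderI)
    fix t assume t: "3 * real N * tau \<le> t"
    moreover have "0 \<le> 3 * real N * tau"
      using tau_pos by simp
    ultimately have "0 \<le> t"
      by linarith
    with t have "norm (z t) \<le> overshoot * contraction ^ N * norm (z 0)"
      by (intro norm_solution_decay[OF sol _ G]) auto
    then show "dist (z t) 0 < \<epsilon>"
      using N by (simp add: algebra_simps)
  qed
qed

text \<open>A continuation argument: while the solution stays in the ball the nonlinearity is small,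
  so the a priori bound \<open>norm (z t) \<le> overshoot * norm (z 0) < r\<close> holds and the solution
  cannot reach the boundary.\<close>

lemma solution_stays_in_ball:
  assumes sol: "solution_on G I z" and I: "initial_segment I"
    and G: "\<And>w. norm w \<le> r \<Longrightarrow> norm (G w) \<le> eps0 * norm w"
    and small: "overshoot * norm (z 0) < r" and t: "t \<in> I"
  shows "norm (z t) < r"
proof (rule ccontr)
  assume "\<not> norm (z t) < r"
  have sub: "{0..t} \<subseteq> I" "0 \<le> t"
    using I t by (auto simp: initial_segment_def)
  have z_cont: "continuous_on {0..t} z"
    using sol sub by (auto simp: solution_on_def intro: continuous_on_subset)
  define B where "B = {s \<in> {0..t}. r \<le> norm (z s)}"
  have "closed B"
    unfolding B_def by (intro continuous_on_closed_Collect_le continuous_intros z_cont)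
  then have "compact ({0..t} \<inter> B)"
    by (rule compact_Int_closed[OF compact_Icc])
  moreover have "{0..t} \<inter> B = B"
    by (auto simp: B_def)
  ultimately have "compact B"
    by simp
  moreover have "t \<in> B"
    using \<open>\<not> norm (z t) < r\<close> sub by (auto simp: B_def)
  ultimately obtain t1 where t1: "t1 \<in> B" and first: "\<And>s. s \<in> B \<Longrightarrow> t1 \<le> s"
    using continuous_attains_inf[of B "\<lambda>s. s"] by (auto intro: continuous_intros)
  have z0: "norm (z 0) < r"
    using small overshoot_ge_1 mult_right_mono[of 1 overshoot "norm (z 0)"] by simp
  then have "0 < t1"
    using t1 by (auto simp: B_def less_le)
  have below: "norm (z s) < r" if "s \<in> {0..<t1}" for s
    using first[of s] that t1 by (force simp: B_def)
  have "norm (z s) \<le> overshoot * norm (z 0)" if "s \<in> {0..<t1}" for s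
  proof (rule norm_solution_le_overshoot[OF _ initial_segment_atLeastLessThan _ that])
    show "solution_on G {0..<t1} z"
      using sol sub t1 by (elim solution_on_subset) (auto simp: B_def)
    show "\<forall>s\<in>{0..<t1}. norm (G (z s)) \<le> eps0 * norm (z s)"
      using G below by (simp add: less_imp_le)
  qed
  then have "closure {0..<t1} \<subseteq> {s \<in> {0..t1}. norm (z s) \<le> overshoot * norm (z 0)}"
    using t1 z_cont
    by (intro closure_minimal continuous_on_closed_Collect_le continuous_intros)
      (auto simp: B_def intro: continuous_on_subset)
  moreover have "t1 \<in> closure {0..<t1}"
    using \<open>0 < t1\<close> by simp
  ultimately have "norm (z t1) \<le> overshoot * norm (z 0)"
    by blast
  with t1 small show False
    by (auto simp: B_def)
qed

context
  fixes G :: "real^2 \<Rightarrow> real^2" and r :: real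
  assumes G0: "G 0 = 0" and r: "0 < r"
    and G_lip: "\<And>v w. v \<in> cball 0 r \<Longrightarrow> w \<in> cball 0 r \<Longrightarrow> norm (G v - G w) \<le> eps0 * norm (v - w)"
begin

lemma norm_le_eps0_in_ball: "norm w \<le> r \<Longrightarrow> norm (G w) \<le> eps0 * norm w"
  using G_lip[of w 0] r by (simp add: G0)

lemma small_solution_nonlinearity_le:
  assumes "solution_on G I z" "initial_segment I" "overshoot * norm (z 0) < r"
  shows "\<forall>s\<in>I. norm (G (z s)) \<le> eps0 * norm (z s)"
  using solution_stays_in_ball[OF assms(1,2) norm_le_eps0_in_ball assms(3)] norm_le_eps0_in_ball
  by (simp add: less_imp_le)

text \<open>Existence is proved for the nonlinearity truncated outside the ball, which is
  globally Lipschitz; the solution never leaves the ball, where the truncation is inactive.\<close>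

lemma small_solution_exists:
  assumes small: "overshoot * norm z0 < r"
  obtains z where "solution_on G {0..} z" "z 0 = z0"
proof -
  define P where "P = closest_point (cball (0 :: real^2) r)"
  have P_in: "P w \<in> cball 0 r" for w
    unfolding P_def by (rule closest_point_in_set) (use r in auto)
  have P_id: "P w = w" if "norm w \<le> r" for w
    using that by (simp add: P_def closest_point_self)
  have P_lip: "norm ((G \<circ> P) v - (G \<circ> P) w) \<le> eps0 * norm (v - w)" for v w
  proof -
    have "norm (P v - P w) \<le> norm (v - w)"
      using closest_point_lipschitz[of "cball 0 r" v w] r by (simp add: P_def dist_norm)
    then have "eps0 * norm (P v - P w) \<le> eps0 * norm (v - w)"
      using eps0_pos by (simp add: mult_left_mono)
    then show ?thesis
      using G_lip[OF P_in P_in, of v w] by simp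
  qed
  obtain z where z: "solution_on (G \<circ> P) {0..} z" "z 0 = z0"
    using solution_exists_if_lipschitz[OF P_lip less_imp_le[OF eps0_pos]] by blast
  have "norm ((G \<circ> P) w) \<le> eps0 * norm w" if "norm w \<le> r" for w
    using norm_le_eps0_in_ball[OF that] that by (simp add: P_id)
  moreover have "overshoot * norm (z 0) < r"
    using small z(2) by simp
  ultimately have "norm (z t) < r" if "0 \<le> t" for t
    using solution_stays_in_ball[OF z(1) initial_segment_atLeast] that by simp
  then have rhs_eq: "rhs (G \<circ> P) z s = rhs G z s" if "0 \<le> s" for s
    using that by (simp add: rhs_def P_id less_imp_le)
  have "(rhs G z has_integral z t - z 0) {0..t}" if "0 \<le> t" for t
  proof -
    have "(rhs (G \<circ> P) z has_integral z t - z 0) {0..t}"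
      using z(1) that by (simp add: solution_on_def)
    then show ?thesis
      by (rule has_integral_eq[rotated]) (simp add: rhs_eq)
  qed
  then have "solution_on G {0..} z"
    using z(1) by (simp add: solution_on_def)
  then show thesis
    using z(2) by (rule that)
qed

lemma loc_stable_solution_on: "loc_stable (solution_on G) 0"
  unfolding loc_stable_def diff_zero
proof (intro allI impI)
  fix eta :: real assume "0 < eta"
  have "(\<exists>z. solution_on G {0..} z \<and> z 0 = z0) \<and>
      (\<forall>T z. solution_on G {0..<T} z \<and> z 0 = z0 \<longrightarrow> (\<forall>t\<in>{0..<T}. norm (z t) < eta)) \<and>
      (\<forall>z. solution_on G {0..} z \<and> z 0 = z0 \<longrightarrow> (\<forall>t\<ge>0. norm (z t) < eta))"
    if "norm z0 < min r eta / overshoot" for z0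
  proof -
    have small: "overshoot * norm z0 < r" "overshoot * norm z0 < eta"
      using that overshoot_ge_1 by (simp_all add: field_simps)
    obtain z where "solution_on G {0..} z" "z 0 = z0"
      using small_solution_exists[OF small(1)] .
    moreover have "norm (z t) < eta"
      if "solution_on G I z" "initial_segment I" "z 0 = z0" "t \<in> I" for I z t
      using norm_solution_le_overshoot[OF that(1,2) small_solution_nonlinearity_le that(4)]
        small that by simp
    ultimately show ?thesis
      by auto
  qed
  moreover have "0 < min r eta / overshoot"
    using r \<open>0 < eta\<close> overshoot_ge_1 by simp
  ultimately show "\<exists>delta>0. \<forall>z0. norm z0 < delta \<longrightarrow>
      (\<exists>z. solution_on G {0..} z \<and> z 0 = z0) \<and>
      (\<forall>T z. solution_on G {0..<T} z \<and> z 0 = z0 \<longrightarrow> (\<forall>t\<in>{0..<T}. norm (z t) < eta)) \<and>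
      (\<forall>z. solution_on G {0..} z \<and> z 0 = z0 \<longrightarrow> (\<forall>t\<ge>0. norm (z t) < eta))"
    by blast
qed

lemma loc_attractive_solution_on: "loc_attractive (solution_on G) 0"
proof -
  have "(z \<longlongrightarrow> 0) at_top" if "solution_on G {0..} z" "norm (z 0) < r / overshoot" for z
  proof -
    have "overshoot * norm (z 0) < r"
      using that(2) overshoot_ge_1 by (simp add: field_simps)
    then show ?thesis
      by (intro solution_tendsto_0[OF that(1)] small_solution_nonlinearity_le[OF that(1)]) auto
  qed
  then show ?thesis
    unfolding loc_attractive_def using r overshoot_ge_1 by (auto intro!: exI[of _ "r / overshoot"])
qed

end

end

theorem mainTheorem1:
  fixes f :: "real^2 \<Rightarrow> real^2" and xs :: "real^2"
    and Df :: "real^2 \<Rightarrow> real^2^2" and S :: "(real^2) set"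
    and V :: "real^2^2" and lam1 lam2 tau zeta1 zeta2 :: real
  assumes eq: "f xs = 0"
    and S: "open S" "xs \<in> S"
    and deriv: "\<And>x. x \<in> S \<Longrightarrow> (f has_derivative (\<lambda>h. Df x *v h)) (at x)"
    and cont: "continuous_on S Df"
    and V: "invertible V"
    and A: "Df xs = matrix_inv V ** diag2 lam1 lam2 ** V"
    and lam: "lam1 \<noteq> 0" "lam2 \<noteq> 0" "lam1 > 0 \<or> lam2 > 0"
    and tau: "tau > 0"
    and zeta: "\<bar>zeta1\<bar> < 1" "\<bar>zeta2\<bar> < 1"
  shows "ctrl_loc_asym_stable f
           (matrix_inv V ** diag2 (ctrl_k lam1 tau zeta1) (ctrl_k lam2 tau zeta2) ** V) tau xs"
proof -
  define Vi where "Vi = matrix_inv V"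
  define k1 where "k1 = ctrl_k lam1 tau zeta1"
  define k2 where "k2 = ctrl_k lam2 tau zeta2"
  define G where "G = (\<lambda>w. V *v f (xs + Vi *v w) - diag2 lam1 lam2 *v w)"
  note inverse = invertible_matrix_inv[OF V, folded Vi_def]
  interpret contracting_switched_feedback tau lam1 lam2 k1 k2
    using tau lam zeta switched_feedback.abs_multiplier_ctrl_k_less_1[of tau]
    by unfold_locales (simp_all add: switched_feedback_def k1_def k2_def)
  obtain r where r: "0 < r" and G_lip:
    "\<And>v w. v \<in> cball 0 r \<Longrightarrow> w \<in> cball 0 r \<Longrightarrow> norm (G v - G w) \<le> eps0 * norm (v - w)"
    using conjugated_remainder_lipschitz[OF S deriv cont inverse(1) A[folded Vi_def] eps0_pos]
    unfolding G_def by blast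
  have G0: "G 0 = 0"
    by (simp add: G_def eq)
  have "loc_stable (solution_on G) 0"
    by (rule loc_stable_solution_on[OF G0 r G_lip])
  moreover have "loc_attractive (solution_on G) 0"
    by (rule loc_attractive_solution_on[OF G0 r G_lip])
  moreover have "ctrl_solution_on f (Vi ** diag2 k1 k2 ** V) tau I x \<longleftrightarrow>
      solution_on G I (\<lambda>t. V *v (x t - xs))" for I x
    unfolding G_def by (rule ctrl_solution_on_iff_solution_on[OF inverse])
  moreover have "Vi *v (V *v u) = u" "V *v (Vi *v u) = u" for u
    by (simp_all add: matrix_vector_mul_assoc inverse)
  ultimately show ?thesis
    unfolding ctrl_loc_asym_stable_iff Vi_def[symmetric] k1_def[symmetric] k2_def[symmetric]
    by (metis loc_stable_linear_transform loc_attractive_linear_transform matrix_vector_mul_bounded_linear)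
qed

end
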